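(* Let $T>0$, $q>0$, $\eta>0$, $c>0$, $k\ge0$, and let $\lambda:[0,T]\to(0,\infty)$ be non-decreasing and continuously differentiable with $\lambda(0)=1$. There exists a constant $C>0$ depending only on $\lambda$, $c$, $q$ and $\eta$ such that, if $k>\max(4C^2,1)$, the equation $$\partial_t\Lambda(\tau;t)-2k\Lambda(\tau;t)+2\lambda(t-\tau)\Big(\Lambda(t;t)+\frac q2\Big)^2-4\Big(\Lambda(\tau;t)+\frac q2\lambda(t-\tau)\Big)\Big(\Lambda(t;t)+\frac q2\Big)+\frac\eta2\lambda(t-\tau)=0,\qquad \Lambda(\tau;T)=\frac c2\lambda(T-\tau),$$ for $0\le\tau\le t\le T$, admits a unique (continuous, real-valued) solution $\Lambda$ on $\{(\tau,t):0\le\tau\le t\le T\}$. *)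

theory Defs
  imports "HOL-Analysis.Analysis"
begin

definition triangle :: "real \<Rightarrow> (real \<times> real) set" where
  "triangle T = {(\<tau>, t). 0 \<le> \<tau> \<and> \<tau> \<le> t \<and> t \<le> T}"

definition is_solution ::
  "real \<Rightarrow> real \<Rightarrow> real \<Rightarrow> real \<Rightarrow> real \<Rightarrow> (real \<Rightarrow> real) \<Rightarrow> (real \<Rightarrow> real \<Rightarrow> real) \<Rightarrow> bool"
where
  "is_solution T k q \<eta> c lam Lam \<longleftrightarrow>
     continuous_on (triangle T) (\<lambda>(\<tau>, t). Lam \<tau> t) \<and>
     (\<forall>\<tau> t. (\<tau>, t) \<in> triangle T \<longrightarrow>
        (\<exists>D. ((\<lambda>s. Lam \<tau> s) has_real_derivative D) (at t within {\<tau>..T}) \<and>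
             D - 2 * k * Lam \<tau> t + 2 * lam (t - \<tau>) * (Lam t t + q / 2)^2
               - 4 * (Lam \<tau> t + q / 2 * lam (t - \<tau>)) * (Lam t t + q / 2)
               + \<eta> / 2 * lam (t - \<tau>) = 0)) \<and>
     (\<forall>\<tau>. 0 \<le> \<tau> \<and> \<tau> \<le> T \<longrightarrow> Lam \<tau> T = c / 2 * lam (T - \<tau>))"

end

theory Submission
  imports Defs
begin

text \<open>
  Freezing the diagonal \<open>g(t) = \<Lambda>(t;t)\<close> turns the equation into a linear equation in \<open>t\<close> for
  each \<open>\<tau>\<close>, \<open>\<partial>\<^sub>t\<Lambda> = (2k + 4g + 2q) \<Lambda> + \<lambda>(t - \<tau>) ((q\<^sup>2 - \<eta>)/2 - 2g\<^sup>2)\<close>, which is solved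
  backwards from \<open>T\<close> by variation of constants. For \<open>g\<close> in a fixed ball of bounded continuous
  functions the integrating factor decays like \<open>exp (-(2k - M)(s - t))\<close>, with \<open>M\<close> depending only
  on the ball and \<open>q\<close>, so for large \<open>k\<close> the map sending \<open>g\<close> to the diagonal of the frozen solution
  maps the ball into itself and is a contraction with constant \<open>O(1/k)\<close>; its fixed point yields a
  solution.
  Uniqueness holds for every \<open>k\<close>: two solutions are bounded on the compact triangle, so their
  difference \<open>\<delta>\<close> satisfies \<open>|\<partial>\<^sub>t\<delta>(\<tau>;t)| \<le> K (|\<delta>(\<tau>;t)| + |\<delta>(t;t)|)\<close>, and a maximum argument
  shows that \<open>\<delta>\<close> vanishes on successive strips \<open>t \<ge> T - n\<epsilon>\<close>.
\<close>

lemma abs_exp_diff_le: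
  fixes x y :: real
  shows "\<bar>exp x - exp y\<bar> \<le> exp (max x y) * \<bar>x - y\<bar>"
proof -
  have *: "exp a - exp b \<le> exp a * (a - b)" if "b \<le> a" for a b :: real
  proof -
    have "1 - exp (b - a) \<le> a - b"
      using exp_ge_add_one_self[of "b - a"] by linarith
    then have "exp a * (1 - exp (b - a)) \<le> exp a * (a - b)"
      by (rule mult_left_mono) simp
    then show ?thesis by (simp add: algebra_simps flip: exp_add)
  qed
  show ?thesis
    using *[of y x] *[of x y] by (cases "y \<le> x") (auto simp: max_def abs_minus_commute)
qed

lemma mult_exp_neg_le:
  fixes x \<gamma> :: real
  assumes "0 \<le> x" "0 < \<gamma>"
  shows "x * exp (- \<gamma> * x) \<le> 2 / \<gamma> * exp (- \<gamma> / 2 * x)"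
proof -
  have "x \<le> 2 / \<gamma> * exp (\<gamma> / 2 * x)"
    using exp_ge_add_one_self[of "\<gamma> / 2 * x"] assms by (simp add: field_simps)
  then have "x * exp (- \<gamma> * x) \<le> 2 / \<gamma> * exp (\<gamma> / 2 * x) * exp (- \<gamma> * x)"
    by (rule mult_right_mono) simp
  also have "\<dots> = 2 / \<gamma> * exp (- \<gamma> / 2 * x)"
    by (simp add: mult.assoc flip: exp_add)
  finally show ?thesis .
qed

lemma has_integral_exp_decay:
  fixes \<gamma> a b :: real
  assumes "0 < \<gamma>" "a \<le> b"
  shows "((\<lambda>s. exp (- \<gamma> * (s - a))) has_integral (1 - exp (- \<gamma> * (b - a))) / \<gamma>) {a..b}"
proof -
  have "((\<lambda>s. exp (- \<gamma> * (s - a))) has_integral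
          - exp (- \<gamma> * (b - a)) / \<gamma> - - exp (- \<gamma> * (a - a)) / \<gamma>) {a..b}"
    using assms
    by (intro fundamental_theorem_of_calculus)
       (auto intro!: derivative_eq_intros simp flip: has_real_derivative_iff_has_vector_derivative)
  then show ?thesis by (simp add: diff_divide_distrib)
qed

lemma integral_abs_le_exp_decay:
  fixes f :: "real \<Rightarrow> real" and \<gamma> a b B :: real
  assumes "0 < \<gamma>" "a \<le> b" "continuous_on {a..b} f"
    and "\<And>s. s \<in> {a..b} \<Longrightarrow> \<bar>f s\<bar> \<le> B * exp (- \<gamma> * (s - a))"
  shows "\<bar>integral {a..b} f\<bar> \<le> B / \<gamma>"
proof -
  have exp_int: "((\<lambda>s. B * exp (- \<gamma> * (s - a))) has_integral B * ((1 - exp (- \<gamma> * (b - a))) / \<gamma>)) {a..b}"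
    using has_integral_mult_right[OF has_integral_exp_decay[OF assms(1,2)]] .
  have "0 \<le> B"
    using assms(4)[of a] assms(2) by (auto intro: order_trans)
  have "\<bar>integral {a..b} f\<bar> \<le> B * ((1 - exp (- \<gamma> * (b - a))) / \<gamma>)"
    using integral_norm_bound_integral[OF integrable_continuous_interval[OF assms(3)]
        has_integral_integrable[OF exp_int]] assms(4) integral_unique[OF exp_int]
    by simp
  also have "\<dots> \<le> B / \<gamma>"
    using \<open>0 \<le> B\<close> assms(1) by (simp add: mult_left_le divide_right_mono)
  finally show ?thesis .
qed

lemma integral_ge_mult_length:
  fixes p :: "real \<Rightarrow> real"
  assumes p: "continuous_on {a..b} p" and "\<And>s. s \<in> {a..b} \<Longrightarrow> \<beta> \<le> p s"
    and "a \<le> t" "t \<le> s" "s \<le> b"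
  shows "\<beta> * (s - t) \<le> integral {t..s} p"
proof -
  have "integral {t..s} (\<lambda>_. \<beta>) \<le> integral {t..s} p"
    by (intro integral_le integrable_continuous_interval continuous_on_subset[OF p] continuous_on_const)
       (use assms in auto)
  then show ?thesis using \<open>t \<le> s\<close> by (simp add: algebra_simps)
qed

lemma abs_integral_diff_le:
  fixes p\<^sub>1 p\<^sub>2 :: "real \<Rightarrow> real"
  assumes p\<^sub>1: "continuous_on {a..b} p\<^sub>1" and p\<^sub>2: "continuous_on {a..b} p\<^sub>2"
    and "\<And>s. s \<in> {a..b} \<Longrightarrow> \<bar>p\<^sub>1 s - p\<^sub>2 s\<bar> \<le> d" and "a \<le> t" "t \<le> s" "s \<le> b"
  shows "\<bar>integral {t..s} p\<^sub>1 - integral {t..s} p\<^sub>2\<bar> \<le> d * (s - t)"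
proof -
  have cont: "continuous_on {t..s} (\<lambda>x. p\<^sub>1 x - p\<^sub>2 x)"
    using assms by (intro continuous_intros continuous_on_subset[OF p\<^sub>1] continuous_on_subset[OF p\<^sub>2]) auto
  have "integral {t..s} p\<^sub>1 - integral {t..s} p\<^sub>2 = integral {t..s} (\<lambda>x. p\<^sub>1 x - p\<^sub>2 x)"
    using assms by (intro integral_diff[symmetric] integrable_continuous_interval
        continuous_on_subset[OF p\<^sub>1] continuous_on_subset[OF p\<^sub>2]) auto
  also have "\<bar>\<dots>\<bar> \<le> d * (s - t)"
    using integral_bound[OF \<open>t \<le> s\<close> cont, of d] assms by auto
  finally show ?thesis .
qed

text \<open>The factor \<open>(s - t)\<close> coming from the difference of the exponents is absorbed by halving the
  decay rate.\<close>

lemma abs_exp_neg_integral_diff_le: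
  fixes p\<^sub>1 p\<^sub>2 :: "real \<Rightarrow> real"
  assumes p\<^sub>1: "continuous_on {a..b} p\<^sub>1" and p\<^sub>2: "continuous_on {a..b} p\<^sub>2" and "0 < \<beta>"
    and ge\<^sub>1: "\<And>s. s \<in> {a..b} \<Longrightarrow> \<beta> \<le> p\<^sub>1 s" and ge\<^sub>2: "\<And>s. s \<in> {a..b} \<Longrightarrow> \<beta> \<le> p\<^sub>2 s"
    and diff: "\<And>s. s \<in> {a..b} \<Longrightarrow> \<bar>p\<^sub>1 s - p\<^sub>2 s\<bar> \<le> d" and "a \<le> t" "t \<le> s" "s \<le> b"
  shows "\<bar>exp (- integral {t..s} p\<^sub>1) - exp (- integral {t..s} p\<^sub>2)\<bar> \<le> 2 * d / \<beta> * exp (- \<beta> / 2 * (s - t))"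
proof -
  have "\<bar>p\<^sub>1 t - p\<^sub>2 t\<bar> \<le> d" using diff assms by auto
  then have "0 \<le> d" by (rule order_trans[OF abs_ge_zero])
  have "max (- integral {t..s} p\<^sub>1) (- integral {t..s} p\<^sub>2) \<le> - \<beta> * (s - t)"
    using integral_ge_mult_length[OF p\<^sub>1 ge\<^sub>1] integral_ge_mult_length[OF p\<^sub>2 ge\<^sub>2] assms by auto
  then have "\<bar>exp (- integral {t..s} p\<^sub>1) - exp (- integral {t..s} p\<^sub>2)\<bar> \<le> exp (- \<beta> * (s - t)) * (d * (s - t))"
    using abs_exp_diff_le[of "- integral {t..s} p\<^sub>1" "- integral {t..s} p\<^sub>2"]
      abs_integral_diff_le[OF p\<^sub>1 p\<^sub>2 diff, of t s] assms
    by (smt (verit, best) exp_ge_zero exp_le_cancel_iff mult_mono)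
  also have "\<dots> = d * ((s - t) * exp (- \<beta> * (s - t)))" by simp
  also have "\<dots> \<le> d * (2 / \<beta> * exp (- \<beta> / 2 * (s - t)))"
    using mult_exp_neg_le[of "s - t" \<beta>] assms \<open>0 \<le> d\<close> by (intro mult_left_mono) auto
  finally show ?thesis by (simp add: algebra_simps)
qed

lemma abs_exp_neg_integral_mult_diff_le:
  fixes p\<^sub>1 p\<^sub>2 f\<^sub>1 f\<^sub>2 :: "real \<Rightarrow> real"
  assumes p\<^sub>1: "continuous_on {a..b} p\<^sub>1" and p\<^sub>2: "continuous_on {a..b} p\<^sub>2" and "0 < \<beta>"
    and ge\<^sub>1: "\<And>s. s \<in> {a..b} \<Longrightarrow> \<beta> \<le> p\<^sub>1 s" and ge\<^sub>2: "\<And>s. s \<in> {a..b} \<Longrightarrow> \<beta> \<le> p\<^sub>2 s"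
    and dp: "\<And>s. s \<in> {a..b} \<Longrightarrow> \<bar>p\<^sub>1 s - p\<^sub>2 s\<bar> \<le> d\<^sub>p"
    and "\<bar>f\<^sub>1 s\<bar> \<le> F" "\<bar>f\<^sub>1 s - f\<^sub>2 s\<bar> \<le> d\<^sub>f" and "a \<le> t" "t \<le> s" "s \<le> b"
  shows "\<bar>exp (- integral {t..s} p\<^sub>1) * f\<^sub>1 s - exp (- integral {t..s} p\<^sub>2) * f\<^sub>2 s\<bar>
           \<le> (2 * d\<^sub>p / \<beta> * F + d\<^sub>f) * exp (- (\<beta> / 2) * (s - t))"
proof -
  define E\<^sub>1 where "E\<^sub>1 = exp (- integral {t..s} p\<^sub>1)"
  define E\<^sub>2 where "E\<^sub>2 = exp (- integral {t..s} p\<^sub>2)"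
  have "\<beta> * (s - t) \<le> integral {t..s} p\<^sub>2" "0 \<le> \<beta> * (s - t)"
    using integral_ge_mult_length[OF p\<^sub>2 ge\<^sub>2] assms by auto
  then have "- integral {t..s} p\<^sub>2 \<le> - \<beta> / 2 * (s - t)" by linarith
  then have E\<^sub>2: "E\<^sub>2 \<le> exp (- \<beta> / 2 * (s - t))" by (simp add: E\<^sub>2_def)
  have "E\<^sub>1 * f\<^sub>1 s - E\<^sub>2 * f\<^sub>2 s = (E\<^sub>1 - E\<^sub>2) * f\<^sub>1 s + E\<^sub>2 * (f\<^sub>1 s - f\<^sub>2 s)"
    by (simp add: algebra_simps)
  then have "\<bar>E\<^sub>1 * f\<^sub>1 s - E\<^sub>2 * f\<^sub>2 s\<bar> \<le> \<bar>(E\<^sub>1 - E\<^sub>2) * f\<^sub>1 s\<bar> + \<bar>E\<^sub>2 * (f\<^sub>1 s - f\<^sub>2 s)\<bar>"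
    by (simp only: abs_triangle_ineq)
  also have "\<dots> = \<bar>E\<^sub>1 - E\<^sub>2\<bar> * \<bar>f\<^sub>1 s\<bar> + E\<^sub>2 * \<bar>f\<^sub>1 s - f\<^sub>2 s\<bar>"
    by (simp add: abs_mult E\<^sub>2_def)
  also have "\<dots> \<le> 2 * d\<^sub>p / \<beta> * exp (- \<beta> / 2 * (s - t)) * F + exp (- \<beta> / 2 * (s - t)) * d\<^sub>f"
    using abs_exp_neg_integral_diff_le[OF p\<^sub>1 p\<^sub>2 \<open>0 < \<beta>\<close> ge\<^sub>1 ge\<^sub>2 dp] E\<^sub>2 assms
    by (intro add_mono mult_mono) (auto simp: E\<^sub>1_def E\<^sub>2_def intro: order_trans[OF abs_ge_zero])
  finally show ?thesis
    by (simp add: E\<^sub>1_def E\<^sub>2_def algebra_simps)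
qed

section \<open>Continuity of parametric integrals\<close>

lemma continuous_on_Times_if_Lipschitz_snd:
  fixes f :: "'a::metric_space \<Rightarrow> 'b::metric_space \<Rightarrow> 'c::metric_space"
  assumes cont: "\<And>t. t \<in> Y \<Longrightarrow> continuous_on X (\<lambda>x. f x t)"
    and lip: "\<And>x t t'. x \<in> X \<Longrightarrow> t \<in> Y \<Longrightarrow> t' \<in> Y \<Longrightarrow> dist (f x t) (f x t') \<le> B * dist t t'"
  shows "continuous_on (X \<times> Y) (\<lambda>(x, t). f x t)"
  unfolding continuous_on_iff
proof (intro ballI allI impI)
  fix p and e :: real assume "p \<in> X \<times> Y" and e: "0 < e"
  then obtain x\<^sub>0 t\<^sub>0 where p: "p = (x\<^sub>0, t\<^sub>0)" "x\<^sub>0 \<in> X" "t\<^sub>0 \<in> Y" by auto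
  obtain d\<^sub>1 where d\<^sub>1: "0 < d\<^sub>1" "\<And>x. x \<in> X \<Longrightarrow> dist x x\<^sub>0 < d\<^sub>1 \<Longrightarrow> dist (f x t\<^sub>0) (f x\<^sub>0 t\<^sub>0) < e / 2"
    using cont[OF p(3)] p(2) e unfolding continuous_on_iff by (meson half_gt_zero)
  define B' where "B' = \<bar>B\<bar> + 1"
  have "0 < B'" by (simp add: B'_def add_nonneg_pos)
  define d where "d = min d\<^sub>1 (e / 2 / B')"
  show "\<exists>d>0. \<forall>p'\<in>X \<times> Y. dist p' p < d \<longrightarrow> dist ((\<lambda>(x, t). f x t) p') ((\<lambda>(x, t). f x t) p) < e"
  proof (intro exI[of _ d] conjI ballI impI)
    show "0 < d" using d\<^sub>1 e \<open>0 < B'\<close> by (simp add: d_def)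
    fix p' assume "p' \<in> X \<times> Y" "dist p' p < d"
    then obtain x t where p': "p' = (x, t)" "x \<in> X" "t \<in> Y" "dist (x, t) p < d" by auto
    have "dist x x\<^sub>0 < d\<^sub>1"
      using dist_fst_le[of "(x, t)" p] p'(4) p(1) by (simp add: d_def)
    have dt: "dist t t\<^sub>0 < e / 2 / B'"
      using dist_snd_le[of "(x, t)" p] p'(4) p(1) by (simp add: d_def)
    have "dist (f x t) (f x t\<^sub>0) \<le> B * dist t t\<^sub>0" using lip p p' by simp
    also have "\<dots> \<le> B' * dist t t\<^sub>0" by (intro mult_right_mono) (auto simp: B'_def)
    also have "\<dots> \<le> B' * (e / 2 / B')"
      using dt \<open>0 < B'\<close> by (intro mult_left_mono) auto
    also have "\<dots> = e / 2" using \<open>0 < B'\<close> by simp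
    finally have "dist (f x t) (f x t\<^sub>0) \<le> e / 2" .
    moreover have "dist (f x t\<^sub>0) (f x\<^sub>0 t\<^sub>0) < e / 2" by (rule d\<^sub>1(2)[OF p'(2) \<open>dist x x\<^sub>0 < d\<^sub>1\<close>])
    ultimately show "dist ((\<lambda>(x, t). f x t) p') ((\<lambda>(x, t). f x t) p) < e"
      using dist_triangle[of "f x t" "f x\<^sub>0 t\<^sub>0" "f x t\<^sub>0"] p(1) p'(1) by simp
  qed
qed

lemma abs_integral_tail_diff_le:
  fixes f :: "real \<Rightarrow> real"
  assumes "continuous_on {a..b} f" "\<And>s. s \<in> {a..b} \<Longrightarrow> \<bar>f s\<bar> \<le> B" "t \<in> {a..b}" "t' \<in> {a..b}"
  shows "\<bar>integral {t..b} f - integral {t'..b} f\<bar> \<le> B * \<bar>t - t'\<bar>"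
proof -
  have *: "\<bar>integral {u..b} f - integral {u'..b} f\<bar> \<le> B * (u' - u)"
    if "u \<in> {a..b}" "u' \<in> {a..b}" "u \<le> u'" for u u'
  proof -
    have "integral {u..u'} f + integral {u'..b} f = integral {u..b} f"
      using that by (intro Henstock_Kurzweil_Integration.integral_combine integrable_continuous_interval
          continuous_on_subset[OF assms(1)]) auto
    moreover have "\<bar>integral {u..u'} f\<bar> \<le> B * (u' - u)"
      using integral_bound[of u u' f B] that assms(2) continuous_on_subset[OF assms(1), of "{u..u'}"]
      by auto
    ultimately show ?thesis by simp
  qed
  show ?thesis
    using *[of t t'] *[of t' t] assms(3,4) by (cases "t \<le> t'") (auto simp: abs_minus_commute)
qed

lemma continuous_on_integral_tail:
  fixes P :: "'a::metric_space \<Rightarrow> real \<Rightarrow> real"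
  assumes "compact X" and cont: "continuous_on (X \<times> {a..b}) (\<lambda>(x, s). P x s)"
  shows "continuous_on (X \<times> {a..b}) (\<lambda>(x, t). integral {t..b} (P x))"
proof -
  obtain B where "\<And>z. z \<in> X \<times> {a..b} \<Longrightarrow> norm ((\<lambda>(x, s). P x s) z) \<le> B"
    using continuous_on_compact_bound[OF compact_Times[OF assms(1) compact_Icc] cont] by blast
  then have B: "\<bar>P x s\<bar> \<le> B" if "x \<in> X" "s \<in> {a..b}" for x s
    using that by force
  show ?thesis
  proof (rule continuous_on_Times_if_Lipschitz_snd)
    fix t assume "t \<in> {a..b}"
    then have "continuous_on (X \<times> cbox t b) (\<lambda>(x, s). P x s)"
      by (intro continuous_on_subset[OF cont]) auto
    from integral_continuous_on_param[OF this]
    show "continuous_on X (\<lambda>x. integral {t..b} (P x))" by simp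
  next
    fix x t t' assume "x \<in> X" "t \<in> {a..b}" "t' \<in> {a..b}"
    moreover have "continuous_on {a..b} (P x)"
      by (rule continuous_on_compose2[OF cont, where f="\<lambda>s. (x, s)", simplified])
         (use \<open>x \<in> X\<close> in \<open>auto intro!: continuous_intros\<close>)
    ultimately show "dist (integral {t..b} (P x)) (integral {t'..b} (P x)) \<le> B * dist t t'"
      using abs_integral_tail_diff_le[of a b "P x" B t t'] B by (simp add: dist_real_def)
  qed
qed

section \<open>The linear equation with a terminal condition\<close>

text \<open>Variation of constants for \<open>u' = p u + f\<close> on \<open>[a, b]\<close> with \<open>u b = y\<close>.\<close>

definition terminal_solution ::
  "real \<Rightarrow> real \<Rightarrow> (real \<Rightarrow> real) \<Rightarrow> (real \<Rightarrow> real) \<Rightarrow> real \<Rightarrow> real \<Rightarrow> real"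
where
  "terminal_solution a b p f y t =
     exp (integral {a..t} p) *
       (exp (- integral {a..b} p) * y - integral {t..b} (\<lambda>s. exp (- integral {a..s} p) * f s))"

lemma terminal_solution_at_end: "terminal_solution a b p f y b = y"
  by (simp add: terminal_solution_def exp_minus field_simps)

lemma has_real_derivative_terminal_solution:
  assumes p: "continuous_on {a..b} p" and f: "continuous_on {a..b} f" and t: "t \<in> {a..b}"
  shows "(terminal_solution a b p f y has_real_derivative
           p t * terminal_solution a b p f y t + f t) (at t within {a..b})"
proof -
  define \<Psi> where "\<Psi> u = integral {a..u} p" for u
  define g where "g s = exp (- \<Psi> s) * f s" for s
  have \<Psi>: "(\<Psi> has_real_derivative p t) (at t within {a..b})"
    unfolding \<Psi>_def[abs_def] by (rule integral_has_real_derivative[OF p t])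
  have "continuous_on {a..b} \<Psi>"
    unfolding \<Psi>_def[abs_def] by (intro indefinite_integral_continuous_1 integrable_continuous_interval p)
  then have "continuous_on {a..b} g"
    unfolding g_def[abs_def] by (intro continuous_intros f)
  from integral_has_real_derivative'[OF this t]
  have D: "((\<lambda>u. exp (\<Psi> u) * (exp (- \<Psi> b) * y - integral {u..b} g)) has_real_derivative
          exp (\<Psi> t) * p t * (exp (- \<Psi> b) * y - integral {t..b} g) + (0 - - g t) * exp (\<Psi> t))
        (at t within {a..b})"
    by (intro DERIV_mult DERIV_chain2[OF DERIV_exp \<Psi>] DERIV_diff DERIV_const)
  have "g t * exp (\<Psi> t) = f t"
    by (simp add: g_def exp_minus)
  then have D_eq: "exp (\<Psi> t) * p t * (exp (- \<Psi> b) * y - integral {t..b} g) + (0 - - g t) * exp (\<Psi> t)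
      = p t * (exp (\<Psi> t) * (exp (- \<Psi> b) * y - integral {t..b} g)) + f t"
    by (simp add: algebra_simps)
  have eq: "terminal_solution a b p f y = (\<lambda>u. exp (\<Psi> u) * (exp (- \<Psi> b) * y - integral {u..b} g))"
    by (simp add: fun_eq_iff terminal_solution_def \<Psi>_def g_def[abs_def])
  show ?thesis
    unfolding eq using D D_eq by (rule DERIV_cong)
qed

lemma terminal_solution_eq:
  assumes p: "continuous_on {a..b} p" and t: "t \<in> {a..b}"
  shows "terminal_solution a b p f y t =
           exp (- integral {t..b} p) * y - integral {t..b} (\<lambda>s. exp (- integral {t..s} p) * f s)"
proof -
  have combine: "integral {a..s} p = integral {a..t} p + integral {t..s} p" if "s \<in> {t..b}" for s
    using t that by (intro Henstock_Kurzweil_Integration.integral_combine[symmetric]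
        integrable_continuous_interval continuous_on_subset[OF p]) auto
  have "exp (integral {a..t} p) * integral {t..b} (\<lambda>s. exp (- integral {a..s} p) * f s)
      = integral {t..b} (\<lambda>s. exp (integral {a..t} p) * (exp (- integral {a..s} p) * f s))"
    by simp
  also have "\<dots> = integral {t..b} (\<lambda>s. exp (- integral {t..s} p) * f s)"
  proof (rule integral_cong)
    fix s assume "s \<in> {t..b}"
    then show "exp (integral {a..t} p) * (exp (- integral {a..s} p) * f s) = exp (- integral {t..s} p) * f s"
      by (simp add: combine[OF \<open>s \<in> {t..b}\<close>] mult.assoc[symmetric] flip: exp_add)
  qed
  finally have "exp (integral {a..t} p) * integral {t..b} (\<lambda>s. exp (- integral {a..s} p) * f s)
      = integral {t..b} (\<lambda>s. exp (- integral {t..s} p) * f s)" .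
  moreover have "exp (integral {a..t} p) * exp (- integral {a..b} p) = exp (- integral {t..b} p)"
    using combine[of b] t by (simp add: mult_exp_exp)
  ultimately show ?thesis
    by (simp add: terminal_solution_def right_diff_distrib mult.assoc[symmetric])
qed

lemma continuous_on_terminal_solution:
  fixes X :: "'a::metric_space set"
  assumes "compact X" and p: "continuous_on {a..b} p"
    and f: "continuous_on (X \<times> {a..b}) (\<lambda>(x, s). f x s)" and y: "continuous_on X y"
  shows "continuous_on (X \<times> {a..b}) (\<lambda>(x, t). terminal_solution a b p (f x) (y x) t)"
proof -
  define \<Psi> where "\<Psi> u = integral {a..u} p" for u
  have "continuous_on {a..b} \<Psi>"
    unfolding \<Psi>_def[abs_def] by (intro indefinite_integral_continuous_1 integrable_continuous_interval p)
  then have \<Psi>_snd: "continuous_on (X \<times> {a..b}) (\<lambda>z. \<Psi> (snd z))"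
    by (rule continuous_on_compose2) (auto intro: continuous_intros)
  have y_fst: "continuous_on (X \<times> {a..b}) (\<lambda>z. y (fst z))"
    by (rule continuous_on_compose2[OF y continuous_on_fst[OF continuous_on_id]]) auto
  have "continuous_on (X \<times> {a..b}) (\<lambda>(x, s). exp (- \<Psi> s) * f x s)"
    using continuous_on_mult[OF continuous_on_exp[OF continuous_on_minus[OF \<Psi>_snd]] f]
    by (simp add: split_beta)
  with continuous_on_integral_tail[OF assms(1), of a b "\<lambda>x s. exp (- \<Psi> s) * f x s"]
  have "continuous_on (X \<times> {a..b}) (\<lambda>(x, t). integral {t..b} (\<lambda>s. exp (- \<Psi> s) * f x s))"
    by simp
  then have "continuous_on (X \<times> {a..b}) (\<lambda>z. exp (\<Psi> (snd z)) *
      (exp (- \<Psi> b) * y (fst z) - (\<lambda>(x, t). integral {t..b} (\<lambda>s. exp (- \<Psi> s) * f x s)) z))"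
    using \<Psi>_snd y_fst by (intro continuous_intros) auto
  then show ?thesis
    by (simp add: terminal_solution_def \<Psi>_def split_beta)
qed

lemma abs_terminal_solution_le:
  assumes p: "continuous_on {a..b} p" and f: "continuous_on {a..b} f" and t: "t \<in> {a..b}"
    and "0 < \<beta>" and p_ge: "\<And>s. s \<in> {a..b} \<Longrightarrow> \<beta> \<le> p s"
    and f_le: "\<And>s. s \<in> {a..b} \<Longrightarrow> \<bar>f s\<bar> \<le> F"
  shows "\<bar>terminal_solution a b p f y t\<bar> \<le> \<bar>y\<bar> + F / \<beta>"
proof -
  have "exp (- integral {t..b} p) \<le> exp (- \<beta> * (b - t))"
    using integral_ge_mult_length[OF p p_ge, of t b] t by simp
  also have "\<dots> \<le> 1"
    using t \<open>0 < \<beta>\<close> by simp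
  finally have "\<bar>exp (- integral {t..b} p) * y\<bar> \<le> \<bar>y\<bar>"
    by (simp add: abs_mult mult_left_le_one_le)
  moreover have "\<bar>integral {t..b} (\<lambda>s. exp (- integral {t..s} p) * f s)\<bar> \<le> F / \<beta>"
  proof (rule integral_abs_le_exp_decay[OF \<open>0 < \<beta>\<close>])
    show "t \<le> b" using t by simp
    show "continuous_on {t..b} (\<lambda>s. exp (- integral {t..s} p) * f s)"
      using t by (intro continuous_intros indefinite_integral_continuous_1 integrable_continuous_interval
          continuous_on_subset[OF p] continuous_on_subset[OF f]) auto
    fix s assume "s \<in> {t..b}"
    then show "\<bar>exp (- integral {t..s} p) * f s\<bar> \<le> F * exp (- \<beta> * (s - t))"
      using integral_ge_mult_length[OF p p_ge, of t s] f_le[of s] t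
      by (auto simp: abs_mult mult.commute intro!: mult_mono)
  qed
  ultimately show ?thesis
    by (simp add: terminal_solution_eq[OF p t] order_trans[OF abs_triangle_ineq4])
qed

lemma abs_terminal_solution_diff_le:
  fixes p\<^sub>1 p\<^sub>2 f\<^sub>1 f\<^sub>2 :: "real \<Rightarrow> real"
  assumes p\<^sub>1: "continuous_on {a..b} p\<^sub>1" and p\<^sub>2: "continuous_on {a..b} p\<^sub>2"
    and f\<^sub>1: "continuous_on {a..b} f\<^sub>1" and f\<^sub>2: "continuous_on {a..b} f\<^sub>2"
    and t: "t \<in> {a..b}" and "0 < \<beta>"
    and ge\<^sub>1: "\<And>s. s \<in> {a..b} \<Longrightarrow> \<beta> \<le> p\<^sub>1 s" and ge\<^sub>2: "\<And>s. s \<in> {a..b} \<Longrightarrow> \<beta> \<le> p\<^sub>2 s"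
    and dp: "\<And>s. s \<in> {a..b} \<Longrightarrow> \<bar>p\<^sub>1 s - p\<^sub>2 s\<bar> \<le> d\<^sub>p"
    and F: "\<And>s. s \<in> {a..b} \<Longrightarrow> \<bar>f\<^sub>1 s\<bar> \<le> F"
    and df: "\<And>s. s \<in> {a..b} \<Longrightarrow> \<bar>f\<^sub>1 s - f\<^sub>2 s\<bar> \<le> d\<^sub>f"
  shows "\<bar>terminal_solution a b p\<^sub>1 f\<^sub>1 y t - terminal_solution a b p\<^sub>2 f\<^sub>2 y t\<bar>
           \<le> 2 * (d\<^sub>p * \<bar>y\<bar> + d\<^sub>f) / \<beta> + 4 * d\<^sub>p * F / \<beta>\<^sup>2"
proof -
  define E\<^sub>1 where "E\<^sub>1 s = exp (- integral {t..s} p\<^sub>1)" for s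
  define E\<^sub>2 where "E\<^sub>2 s = exp (- integral {t..s} p\<^sub>2)" for s
  have "0 \<le> d\<^sub>p"
    using dp[OF t] by (rule order_trans[OF abs_ge_zero])
  have cont: "continuous_on {t..b} (\<lambda>s. E\<^sub>1 s * f\<^sub>1 s)" "continuous_on {t..b} (\<lambda>s. E\<^sub>2 s * f\<^sub>2 s)"
    unfolding E\<^sub>1_def E\<^sub>2_def using t
    by (auto intro!: continuous_intros indefinite_integral_continuous_1 integrable_continuous_interval
        continuous_on_subset[OF p\<^sub>1] continuous_on_subset[OF p\<^sub>2]
        continuous_on_subset[OF f\<^sub>1] continuous_on_subset[OF f\<^sub>2])
  have "terminal_solution a b p\<^sub>1 f\<^sub>1 y t - terminal_solution a b p\<^sub>2 f\<^sub>2 y t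
      = (E\<^sub>1 b - E\<^sub>2 b) * y - integral {t..b} (\<lambda>s. E\<^sub>1 s * f\<^sub>1 s - E\<^sub>2 s * f\<^sub>2 s)"
    using integral_diff[OF integrable_continuous_interval[OF cont(1)] integrable_continuous_interval[OF cont(2)]]
    by (simp add: terminal_solution_eq[OF p\<^sub>1 t] terminal_solution_eq[OF p\<^sub>2 t] E\<^sub>1_def E\<^sub>2_def algebra_simps)
  moreover have "\<bar>(E\<^sub>1 b - E\<^sub>2 b) * y\<bar> \<le> 2 * d\<^sub>p / \<beta> * \<bar>y\<bar>"
  proof -
    have "\<bar>E\<^sub>1 b - E\<^sub>2 b\<bar> \<le> 2 * d\<^sub>p / \<beta> * exp (- \<beta> / 2 * (b - t))"
      unfolding E\<^sub>1_def E\<^sub>2_def using abs_exp_neg_integral_diff_le[OF p\<^sub>1 p\<^sub>2 \<open>0 < \<beta>\<close> ge\<^sub>1 ge\<^sub>2 dp] t by auto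
    also have "\<dots> \<le> 2 * d\<^sub>p / \<beta>"
      using t \<open>0 < \<beta>\<close> \<open>0 \<le> d\<^sub>p\<close> by (intro mult_left_le) auto
    finally show ?thesis
      unfolding abs_mult by (rule mult_right_mono) simp
  qed
  moreover have "\<bar>integral {t..b} (\<lambda>s. E\<^sub>1 s * f\<^sub>1 s - E\<^sub>2 s * f\<^sub>2 s)\<bar> \<le> (2 * d\<^sub>p / \<beta> * F + d\<^sub>f) / (\<beta> / 2)"
  proof (rule integral_abs_le_exp_decay)
    show "0 < \<beta> / 2" "t \<le> b" using \<open>0 < \<beta>\<close> t by auto
    show "continuous_on {t..b} (\<lambda>s. E\<^sub>1 s * f\<^sub>1 s - E\<^sub>2 s * f\<^sub>2 s)"
      by (rule continuous_on_diff[OF cont])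
    fix s assume "s \<in> {t..b}"
    then show "\<bar>E\<^sub>1 s * f\<^sub>1 s - E\<^sub>2 s * f\<^sub>2 s\<bar> \<le> (2 * d\<^sub>p / \<beta> * F + d\<^sub>f) * exp (- (\<beta> / 2) * (s - t))"
      unfolding E\<^sub>1_def E\<^sub>2_def using t F[of s] df[of s]
      by (intro abs_exp_neg_integral_mult_diff_le[OF p\<^sub>1 p\<^sub>2 \<open>0 < \<beta>\<close> ge\<^sub>1 ge\<^sub>2 dp]) auto
  qed
  ultimately have "\<bar>terminal_solution a b p\<^sub>1 f\<^sub>1 y t - terminal_solution a b p\<^sub>2 f\<^sub>2 y t\<bar>
      \<le> 2 * d\<^sub>p / \<beta> * \<bar>y\<bar> + (2 * d\<^sub>p / \<beta> * F + d\<^sub>f) / (\<beta> / 2)"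
    by (smt (verit))
  also have "\<dots> = 2 * (d\<^sub>p * \<bar>y\<bar> + d\<^sub>f) / \<beta> + 4 * d\<^sub>p * F / \<beta>\<^sup>2"
    using \<open>0 < \<beta>\<close> by (simp add: field_simps power2_eq_square)
  finally show ?thesis .
qed

section \<open>Vanishing on the triangle\<close>

lemma compact_triangle: "compact (triangle T)"
proof -
  have "triangle T = ({0..T} \<times> {0..T}) \<inter> {p. fst p \<le> snd p}"
    by (auto simp: triangle_def)
  then show ?thesis
    by (auto intro!: compact_Int_closed compact_Times closed_Collect_le continuous_intros)
qed

lemma abs_le_of_vanishing_above:
  fixes \<delta> \<delta>' :: "real \<Rightarrow> real \<Rightarrow> real"
  assumes deriv: "\<And>\<tau> t. (\<tau>, t) \<in> triangle T \<Longrightarrow> (\<delta> \<tau> has_real_derivative \<delta>' \<tau> t) (at t within {\<tau>..T})"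
    and bound: "\<And>\<tau> t. (\<tau>, t) \<in> triangle T \<Longrightarrow> \<bar>\<delta>' \<tau> t\<bar> \<le> K * (\<bar>\<delta> \<tau> t\<bar> + \<bar>\<delta> t t\<bar>)"
    and "0 \<le> K" "s \<le> T"
    and zero: "\<And>\<tau> t. (\<tau>, t) \<in> triangle T \<Longrightarrow> s \<le> t \<Longrightarrow> \<delta> \<tau> t = 0"
    and M: "\<And>\<tau> t. (\<tau>, t) \<in> triangle T \<Longrightarrow> t\<^sub>0 \<le> t \<Longrightarrow> \<bar>\<delta> \<tau> t\<bar> \<le> M"
    and "(\<tau>\<^sub>0, t\<^sub>0) \<in> triangle T" "t\<^sub>0 \<le> s"
  shows "\<bar>\<delta> \<tau>\<^sub>0 t\<^sub>0\<bar> \<le> 2 * K * M * (s - t\<^sub>0)"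
proof -
  have "0 \<le> \<tau>\<^sub>0" "\<tau>\<^sub>0 \<le> t\<^sub>0"
    using \<open>(\<tau>\<^sub>0, t\<^sub>0) \<in> triangle T\<close> by (auto simp: triangle_def)
  have bnd: "\<bar>\<delta>' \<tau>\<^sub>0 u\<bar> \<le> 2 * K * M" if u: "u \<in> {t\<^sub>0..s}" for u
  proof -
    have "(\<tau>\<^sub>0, u) \<in> triangle T" "(u, u) \<in> triangle T"
      using u \<open>0 \<le> \<tau>\<^sub>0\<close> \<open>\<tau>\<^sub>0 \<le> t\<^sub>0\<close> \<open>s \<le> T\<close> by (auto simp: triangle_def)
    then have "\<bar>\<delta> \<tau>\<^sub>0 u\<bar> + \<bar>\<delta> u u\<bar> \<le> 2 * M"
      using M[of \<tau>\<^sub>0 u] M[of u u] u by simp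
    then have "K * (\<bar>\<delta> \<tau>\<^sub>0 u\<bar> + \<bar>\<delta> u u\<bar>) \<le> K * (2 * M)"
      using \<open>0 \<le> K\<close> by (rule mult_left_mono)
    with bound[OF \<open>(\<tau>\<^sub>0, u) \<in> triangle T\<close>] show ?thesis
      by simp
  qed
  have der: "(\<delta> \<tau>\<^sub>0 has_real_derivative \<delta>' \<tau>\<^sub>0 u) (at u within {t\<^sub>0..s})" if "u \<in> {t\<^sub>0..s}" for u
    using that \<open>0 \<le> \<tau>\<^sub>0\<close> \<open>\<tau>\<^sub>0 \<le> t\<^sub>0\<close> \<open>s \<le> T\<close>
    by (intro DERIV_subset[OF deriv]) (auto simp: triangle_def)
  have "norm (\<delta> \<tau>\<^sub>0 s - \<delta> \<tau>\<^sub>0 t\<^sub>0) \<le> 2 * K * M * norm (s - t\<^sub>0)"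
    by (rule field_differentiable_bound[where S="{t\<^sub>0..s}", OF _ der]) (use bnd \<open>t\<^sub>0 \<le> s\<close> in auto)
  moreover have "\<delta> \<tau>\<^sub>0 s = 0"
    using zero[of \<tau>\<^sub>0 s] \<open>0 \<le> \<tau>\<^sub>0\<close> \<open>\<tau>\<^sub>0 \<le> t\<^sub>0\<close> \<open>t\<^sub>0 \<le> s\<close> \<open>s \<le> T\<close> by (simp add: triangle_def)
  ultimately show ?thesis
    using \<open>t\<^sub>0 \<le> s\<close> by simp
qed

text \<open>At a point where \<open>|\<delta>|\<close> is maximal on the strip \<open>t \<ge> s - \<epsilon>\<close>, the previous estimate bounds
  \<open>|\<delta>|\<close> by \<open>2K\<epsilon>\<close> times its own maximum.\<close>

lemma vanishes_on_triangle_strip: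
  fixes \<delta> \<delta>' :: "real \<Rightarrow> real \<Rightarrow> real"
  assumes cont: "continuous_on (triangle T) (\<lambda>(\<tau>, t). \<delta> \<tau> t)"
    and deriv: "\<And>\<tau> t. (\<tau>, t) \<in> triangle T \<Longrightarrow> (\<delta> \<tau> has_real_derivative \<delta>' \<tau> t) (at t within {\<tau>..T})"
    and bound: "\<And>\<tau> t. (\<tau>, t) \<in> triangle T \<Longrightarrow> \<bar>\<delta>' \<tau> t\<bar> \<le> K * (\<bar>\<delta> \<tau> t\<bar> + \<bar>\<delta> t t\<bar>)"
    and "0 \<le> K" "0 < \<epsilon>" "4 * K * \<epsilon> \<le> 1" "s \<le> T"
    and zero: "\<And>\<tau> t. (\<tau>, t) \<in> triangle T \<Longrightarrow> s \<le> t \<Longrightarrow> \<delta> \<tau> t = 0"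
    and \<tau>t: "(\<tau>, t) \<in> triangle T" "s - \<epsilon> \<le> t"
  shows "\<delta> \<tau> t = 0"
proof -
  define S where "S = triangle T \<inter> {p. s - \<epsilon> \<le> snd p}"
  have "compact S"
    unfolding S_def by (intro compact_Int_closed compact_triangle closed_Collect_le continuous_intros)
  moreover have "(\<tau>, t) \<in> S" using \<tau>t by (simp add: S_def)
  moreover have "continuous_on S (\<lambda>p. \<bar>(\<lambda>(\<tau>, t). \<delta> \<tau> t) p\<bar>)"
    by (intro continuous_on_rabs continuous_on_subset[OF cont]) (auto simp: S_def)
  ultimately obtain \<tau>\<^sub>m t\<^sub>m where m: "(\<tau>\<^sub>m, t\<^sub>m) \<in> S"
    and max: "\<And>\<tau> t. (\<tau>, t) \<in> S \<Longrightarrow> \<bar>\<delta> \<tau> t\<bar> \<le> \<bar>\<delta> \<tau>\<^sub>m t\<^sub>m\<bar>"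
    using continuous_attains_sup[of S "\<lambda>p. \<bar>(\<lambda>(\<tau>, t). \<delta> \<tau> t) p\<bar>"] by fastforce
  define M where "M = \<bar>\<delta> \<tau>\<^sub>m t\<^sub>m\<bar>"
  have "M = 0"
  proof (cases "s \<le> t\<^sub>m")
    case True
    then show ?thesis using zero m by (auto simp: M_def S_def)
  next
    case False
    have "M \<le> 2 * K * M * (s - t\<^sub>m)"
      unfolding M_def using m max False
      by (intro abs_le_of_vanishing_above[OF deriv bound \<open>0 \<le> K\<close> \<open>s \<le> T\<close> zero]) (auto simp: S_def)
    also have "\<dots> \<le> 2 * K * M * \<epsilon>"
      using m \<open>0 \<le> K\<close> by (intro mult_left_mono) (auto simp: M_def S_def)
    also have "\<dots> \<le> M / 2"
    proof -
      have "4 * K * \<epsilon> * M \<le> 1 * M"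
        using \<open>4 * K * \<epsilon> \<le> 1\<close> by (rule mult_right_mono) (simp add: M_def)
      then show ?thesis by (simp add: mult_ac)
    qed
    finally show "M = 0" by (simp add: M_def)
  qed
  then show ?thesis
    using max[of \<tau> t] \<open>(\<tau>, t) \<in> S\<close> by (simp add: M_def)
qed

lemma vanishes_on_triangle:
  fixes \<delta> \<delta>' :: "real \<Rightarrow> real \<Rightarrow> real"
  assumes cont: "continuous_on (triangle T) (\<lambda>(\<tau>, t). \<delta> \<tau> t)"
    and deriv: "\<And>\<tau> t. (\<tau>, t) \<in> triangle T \<Longrightarrow> (\<delta> \<tau> has_real_derivative \<delta>' \<tau> t) (at t within {\<tau>..T})"
    and bound: "\<And>\<tau> t. (\<tau>, t) \<in> triangle T \<Longrightarrow> \<bar>\<delta>' \<tau> t\<bar> \<le> K * (\<bar>\<delta> \<tau> t\<bar> + \<bar>\<delta> t t\<bar>)"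
    and "0 \<le> K" and final: "\<And>\<tau>. \<tau> \<in> {0..T} \<Longrightarrow> \<delta> \<tau> T = 0"
    and "(\<tau>, t) \<in> triangle T"
  shows "\<delta> \<tau> t = 0"
proof -
  define \<epsilon> where "\<epsilon> = 1 / (4 * (K + 1))"
  have "0 < \<epsilon>" "4 * K * \<epsilon> \<le> 1"
    using \<open>0 \<le> K\<close> by (auto simp: \<epsilon>_def field_simps)
  have strips: "\<delta> \<tau> t = 0" if "(\<tau>, t) \<in> triangle T" "T - real n * \<epsilon> \<le> t" for n \<tau> t
    using that
  proof (induction n arbitrary: \<tau> t)
    case 0
    then show ?case using final by (auto simp: triangle_def)
  next
    case (Suc n)
    show ?case
    proof (rule vanishes_on_triangle_strip[OF cont deriv bound \<open>0 \<le> K\<close> \<open>0 < \<epsilon>\<close> \<open>4 * K * \<epsilon> \<le> 1\<close>])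
      show "T - real n * \<epsilon> \<le> T" using \<open>0 < \<epsilon>\<close> by simp
      show "T - real n * \<epsilon> - \<epsilon> \<le> t" using Suc.prems by (simp add: algebra_simps)
    qed (use Suc in auto)
  qed
  obtain n :: nat where "T / \<epsilon> \<le> real n"
    using real_arch_simple by blast
  then have "T - real n * \<epsilon> \<le> t"
    using \<open>0 < \<epsilon>\<close> \<open>(\<tau>, t) \<in> triangle T\<close> by (auto simp: triangle_def field_simps)
  then show ?thesis
    using strips \<open>(\<tau>, t) \<in> triangle T\<close> by blast
qed

section \<open>The Riccati equation and uniqueness\<close>

text \<open>The right-hand side of the equation at \<open>x = \<Lambda>(\<tau>;t)\<close>, \<open>y = \<Lambda>(t;t)\<close> and \<open>l = \<lambda>(t - \<tau>)\<close>.\<close>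

definition riccati_rhs :: "real \<Rightarrow> real \<Rightarrow> real \<Rightarrow> real \<Rightarrow> real \<Rightarrow> real \<Rightarrow> real" where
  "riccati_rhs k q \<eta> l x y =
     2 * k * x - 2 * l * (y + q / 2)\<^sup>2 + 4 * (x + q / 2 * l) * (y + q / 2) - \<eta> / 2 * l"

definition riccati_source :: "real \<Rightarrow> real \<Rightarrow> real \<Rightarrow> real" where
  "riccati_source q \<eta> y = (q\<^sup>2 - \<eta>) / 2 - 2 * y\<^sup>2"

lemma riccati_rhs_eq: "riccati_rhs k q \<eta> l x y = (2 * k + 4 * y + 2 * q) * x + l * riccati_source q \<eta> y"
  by (simp add: riccati_rhs_def riccati_source_def power2_eq_square field_simps)

lemma is_solution_iff:
  "is_solution T k q \<eta> c lam Lam \<longleftrightarrow>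
     continuous_on (triangle T) (\<lambda>(\<tau>, t). Lam \<tau> t) \<and>
     (\<forall>(\<tau>, t) \<in> triangle T.
        (Lam \<tau> has_real_derivative riccati_rhs k q \<eta> (lam (t - \<tau>)) (Lam \<tau> t) (Lam t t)) (at t within {\<tau>..T})) \<and>
     (\<forall>\<tau> \<in> {0..T}. Lam \<tau> T = c / 2 * lam (T - \<tau>))"
proof -
  have "D - 2 * k * Lam \<tau> t + 2 * lam (t - \<tau>) * (Lam t t + q / 2)\<^sup>2
          - 4 * (Lam \<tau> t + q / 2 * lam (t - \<tau>)) * (Lam t t + q / 2) + \<eta> / 2 * lam (t - \<tau>) = 0
        \<longleftrightarrow> D = riccati_rhs k q \<eta> (lam (t - \<tau>)) (Lam \<tau> t) (Lam t t)" for D \<tau> t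
    by (auto simp: riccati_rhs_def algebra_simps)
  then show ?thesis
    unfolding is_solution_def by auto
qed

lemma is_solutionD:
  assumes "is_solution T k q \<eta> c lam Lam"
  shows "continuous_on (triangle T) (\<lambda>(\<tau>, t). Lam \<tau> t)"
    and "(\<tau>, t) \<in> triangle T \<Longrightarrow>
      (Lam \<tau> has_real_derivative riccati_rhs k q \<eta> (lam (t - \<tau>)) (Lam \<tau> t) (Lam t t)) (at t within {\<tau>..T})"
    and "\<tau> \<in> {0..T} \<Longrightarrow> Lam \<tau> T = c / 2 * lam (T - \<tau>)"
  using assms unfolding is_solution_iff by auto

lemma is_solution_bounded:
  assumes "is_solution T k q \<eta> c lam Lam"
  obtains B where "\<And>\<tau> t. (\<tau>, t) \<in> triangle T \<Longrightarrow> \<bar>Lam \<tau> t\<bar> \<le> B"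
proof -
  obtain B where "\<And>p. p \<in> triangle T \<Longrightarrow> norm ((\<lambda>(\<tau>, t). Lam \<tau> t) p) \<le> B"
    using continuous_on_compact_bound[OF compact_triangle is_solutionD(1)[OF assms]] by blast
  then show ?thesis
    by (intro that[of B]) force
qed

lemma abs_riccati_rhs_diff_le:
  assumes "\<bar>y\<^sub>1\<bar> \<le> B" "\<bar>y\<^sub>2\<bar> \<le> B" "\<bar>x\<^sub>2\<bar> \<le> B" "\<bar>l\<bar> \<le> \<Lambda>"
  shows "\<bar>riccati_rhs k q \<eta> l x\<^sub>1 y\<^sub>1 - riccati_rhs k q \<eta> l x\<^sub>2 y\<^sub>2\<bar>
           \<le> (2 * \<bar>k\<bar> + 8 * B + 2 * \<bar>q\<bar> + 4 * \<Lambda> * B) * (\<bar>x\<^sub>1 - x\<^sub>2\<bar> + \<bar>y\<^sub>1 - y\<^sub>2\<bar>)"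
proof -
  define K where "K = 2 * \<bar>k\<bar> + 8 * B + 2 * \<bar>q\<bar> + 4 * \<Lambda> * B"
  define a where "a = 2 * k + 4 * y\<^sub>1 + 2 * q"
  define b where "b = 4 * x\<^sub>2 - 2 * l * (y\<^sub>1 + y\<^sub>2)"
  have "0 \<le> B" "0 \<le> \<Lambda>" using assms by auto
  have "\<bar>a\<bar> \<le> 2 * \<bar>k\<bar> + 4 * \<bar>y\<^sub>1\<bar> + 2 * \<bar>q\<bar>"
    unfolding a_def by (rule order_trans[OF abs_triangle_ineq]) (simp add: abs_triangle_ineq[THEN order_trans] abs_mult)
  then have a: "\<bar>a\<bar> \<le> K"
    using assms(1) \<open>0 \<le> B\<close> mult_nonneg_nonneg[OF \<open>0 \<le> \<Lambda>\<close> \<open>0 \<le> B\<close>] unfolding K_def by linarith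
  have "\<bar>l * (y\<^sub>1 + y\<^sub>2)\<bar> \<le> \<Lambda> * (2 * B)"
    unfolding abs_mult using assms \<open>0 \<le> \<Lambda>\<close> by (intro mult_mono) auto
  moreover have "\<bar>b\<bar> \<le> 4 * \<bar>x\<^sub>2\<bar> + 2 * \<bar>l * (y\<^sub>1 + y\<^sub>2)\<bar>"
    unfolding b_def by (rule order_trans[OF abs_triangle_ineq4]) (simp add: abs_mult)
  ultimately have b: "\<bar>b\<bar> \<le> K"
    using assms(3) abs_ge_zero[of k] abs_ge_zero[of q] unfolding K_def by linarith
  have "riccati_rhs k q \<eta> l x\<^sub>1 y\<^sub>1 - riccati_rhs k q \<eta> l x\<^sub>2 y\<^sub>2 = a * (x\<^sub>1 - x\<^sub>2) + b * (y\<^sub>1 - y\<^sub>2)"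
    by (simp add: a_def b_def riccati_rhs_eq riccati_source_def power2_eq_square algebra_simps)
  also have "\<bar>\<dots>\<bar> \<le> \<bar>a\<bar> * \<bar>x\<^sub>1 - x\<^sub>2\<bar> + \<bar>b\<bar> * \<bar>y\<^sub>1 - y\<^sub>2\<bar>"
    by (metis abs_mult abs_triangle_ineq)
  also have "\<dots> \<le> K * \<bar>x\<^sub>1 - x\<^sub>2\<bar> + K * \<bar>y\<^sub>1 - y\<^sub>2\<bar>"
    using a b by (intro add_mono mult_right_mono) auto
  finally show ?thesis
    by (simp add: K_def distrib_left)
qed

lemma is_solution_unique:
  assumes lam: "continuous_on {0..T} lam"
    and sol1: "is_solution T k q \<eta> c lam Lam\<^sub>1" and sol2: "is_solution T k q \<eta> c lam Lam\<^sub>2"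
    and "(\<tau>, t) \<in> triangle T"
  shows "Lam\<^sub>1 \<tau> t = Lam\<^sub>2 \<tau> t"
proof -
  note cont\<^sub>1 = is_solutionD(1)[OF sol1] and der\<^sub>1 = is_solutionD(2)[OF sol1]
    and end\<^sub>1 = is_solutionD(3)[OF sol1]
  note cont\<^sub>2 = is_solutionD(1)[OF sol2] and der\<^sub>2 = is_solutionD(2)[OF sol2]
    and end\<^sub>2 = is_solutionD(3)[OF sol2]
  obtain B\<^sub>1 where B\<^sub>1: "\<And>\<tau> t. (\<tau>, t) \<in> triangle T \<Longrightarrow> \<bar>Lam\<^sub>1 \<tau> t\<bar> \<le> B\<^sub>1"
    using is_solution_bounded[OF sol1] by blast
  obtain B\<^sub>2 where B\<^sub>2: "\<And>\<tau> t. (\<tau>, t) \<in> triangle T \<Longrightarrow> \<bar>Lam\<^sub>2 \<tau> t\<bar> \<le> B\<^sub>2"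
    using is_solution_bounded[OF sol2] by blast
  obtain \<Lambda> where \<Lambda>: "\<And>x. x \<in> {0..T} \<Longrightarrow> \<bar>lam x\<bar> \<le> \<Lambda>" and "0 \<le> \<Lambda>"
    using continuous_on_compact_bound[OF compact_Icc lam] by (metis real_norm_def)
  define B where "B = max B\<^sub>1 B\<^sub>2"
  have B: "\<bar>Lam\<^sub>1 \<tau> t\<bar> \<le> B" "\<bar>Lam\<^sub>2 \<tau> t\<bar> \<le> B" if "(\<tau>, t) \<in> triangle T" for \<tau> t
    using B\<^sub>1[OF that] B\<^sub>2[OF that] by (auto simp: B_def)
  define K where "K = 2 * \<bar>k\<bar> + 8 * B + 2 * \<bar>q\<bar> + 4 * \<Lambda> * B"
  have "Lam\<^sub>1 \<tau> t - Lam\<^sub>2 \<tau> t = 0"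
  proof (rule vanishes_on_triangle[where \<delta>="\<lambda>\<tau> t. Lam\<^sub>1 \<tau> t - Lam\<^sub>2 \<tau> t" and K=K and
        \<delta>'="\<lambda>\<tau> t. riccati_rhs k q \<eta> (lam (t - \<tau>)) (Lam\<^sub>1 \<tau> t) (Lam\<^sub>1 t t)
                  - riccati_rhs k q \<eta> (lam (t - \<tau>)) (Lam\<^sub>2 \<tau> t) (Lam\<^sub>2 t t)"])
    show "continuous_on (triangle T) (\<lambda>(\<tau>, t). Lam\<^sub>1 \<tau> t - Lam\<^sub>2 \<tau> t)"
      using continuous_on_diff[of _ "\<lambda>(\<tau>, t). Lam\<^sub>1 \<tau> t" "\<lambda>(\<tau>, t). Lam\<^sub>2 \<tau> t"] cont\<^sub>1 cont\<^sub>2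
      by (simp add: split_beta)
  next
    fix \<tau> t assume "(\<tau>, t) \<in> triangle T"
    then have "(t, t) \<in> triangle T" "t - \<tau> \<in> {0..T}" by (auto simp: triangle_def)
    show "((\<lambda>s. Lam\<^sub>1 \<tau> s - Lam\<^sub>2 \<tau> s) has_real_derivative
        riccati_rhs k q \<eta> (lam (t - \<tau>)) (Lam\<^sub>1 \<tau> t) (Lam\<^sub>1 t t)
        - riccati_rhs k q \<eta> (lam (t - \<tau>)) (Lam\<^sub>2 \<tau> t) (Lam\<^sub>2 t t)) (at t within {\<tau>..T})"
      using der\<^sub>1 der\<^sub>2 \<open>(\<tau>, t) \<in> triangle T\<close> by (intro DERIV_diff)
    show "\<bar>riccati_rhs k q \<eta> (lam (t - \<tau>)) (Lam\<^sub>1 \<tau> t) (Lam\<^sub>1 t t)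
        - riccati_rhs k q \<eta> (lam (t - \<tau>)) (Lam\<^sub>2 \<tau> t) (Lam\<^sub>2 t t)\<bar>
        \<le> K * (\<bar>Lam\<^sub>1 \<tau> t - Lam\<^sub>2 \<tau> t\<bar> + \<bar>Lam\<^sub>1 t t - Lam\<^sub>2 t t\<bar>)"
      unfolding K_def using \<open>(\<tau>, t) \<in> triangle T\<close> \<open>(t, t) \<in> triangle T\<close> \<open>t - \<tau> \<in> {0..T}\<close>
      by (intro abs_riccati_rhs_diff_le B \<Lambda>)
  next
    show "0 \<le> K"
      using B[OF \<open>(\<tau>, t) \<in> triangle T\<close>] \<open>0 \<le> \<Lambda>\<close> by (auto simp: K_def)
  next
    fix \<tau> :: real assume "\<tau> \<in> {0..T}"
    then show "Lam\<^sub>1 \<tau> T - Lam\<^sub>2 \<tau> T = 0"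
      by (simp add: end\<^sub>1 end\<^sub>2)
  qed fact
  then show ?thesis by simp
qed

section \<open>Existence for large \<open>k\<close>\<close>

lemma abs_riccati_source_le:
  assumes "\<bar>y\<bar> \<le> R"
  shows "\<bar>riccati_source q \<eta> y\<bar> \<le> \<bar>q\<^sup>2 - \<eta>\<bar> / 2 + 2 * R\<^sup>2"
proof -
  have "y\<^sup>2 \<le> R\<^sup>2" using assms abs_le_square_iff[of y R] by (auto intro: order_trans)
  then show ?thesis
    unfolding riccati_source_def using abs_triangle_ineq4[of "(q\<^sup>2 - \<eta>) / 2" "2 * y\<^sup>2"] by simp
qed

lemma abs_riccati_source_diff_le:
  assumes "\<bar>y\<^sub>1\<bar> \<le> R" "\<bar>y\<^sub>2\<bar> \<le> R"
  shows "\<bar>riccati_source q \<eta> y\<^sub>1 - riccati_source q \<eta> y\<^sub>2\<bar> \<le> 4 * R * \<bar>y\<^sub>1 - y\<^sub>2\<bar>"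
proof -
  have "riccati_source q \<eta> y\<^sub>1 - riccati_source q \<eta> y\<^sub>2 = - 2 * (y\<^sub>1 + y\<^sub>2) * (y\<^sub>1 - y\<^sub>2)"
    by (simp add: riccati_source_def power2_eq_square algebra_simps)
  moreover have "2 * \<bar>y\<^sub>1 + y\<^sub>2\<bar> \<le> 4 * R"
    using assms by (smt (verit))
  ultimately show ?thesis
    by (simp add: abs_mult mult_right_mono)
qed

lemma ext_cont_in_bcontfun:
  fixes f :: "'a::euclidean_space \<Rightarrow> 'b::metric_space"
  assumes "continuous_on (cbox a b) f"
  shows "ext_cont f a b \<in> bcontfun"
  using assms unfolding bcontfun_def ext_cont_def
  by (auto intro!: clamp_continuous_on clamp_bounded compact_imp_bounded[OF compact_continuous_image])

lemma abs_apply_bcontfun_le: "g \<in> cball 0 r \<Longrightarrow> \<bar>apply_bcontfun g x\<bar> \<le> r"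
  using norm_bounded[of g x] by (simp add: dist_norm)

locale riccati_data =
  fixes T q \<eta> c :: real and lam :: "real \<Rightarrow> real" and L :: real
  assumes T_nonneg: "0 \<le> T"
    and lam_cont: "continuous_on {0..T} lam"
    and abs_lam_le: "\<And>x. x \<in> {0..T} \<Longrightarrow> \<bar>lam x\<bar> \<le> L"
begin

text \<open>\<open>\<lambda>(s - \<tau>)\<close> is needed on the whole square \<open>{0..T} \<times> {0..T}\<close>, where \<open>s - \<tau>\<close> may be negative, so
  \<open>\<lambda>\<close> is extended continuously by constants.\<close>

abbreviation lam_ext :: "real \<Rightarrow> real" where
  "lam_ext \<equiv> ext_cont lam 0 T"

lemma clamp_in_domain: "clamp 0 T x \<in> {0..T}"
  using clamp_in_interval[of 0 T x] T_nonneg by simp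

lemma continuous_on_lam_ext: "continuous_on S lam_ext"
  using lam_cont by (intro continuous_on_ext_cont) simp

lemma abs_lam_ext_le: "\<bar>lam_ext x\<bar> \<le> L"
  using abs_lam_le[OF clamp_in_domain] by (simp add: ext_cont_def)

lemma L_nonneg: "0 \<le> L"
  using abs_lam_le[of 0] T_nonneg by auto

definition radius :: real where
  "radius = \<bar>c\<bar> / 2 * L + 1"

definition source_bound :: real where
  "source_bound = \<bar>q\<^sup>2 - \<eta>\<bar> / 2 + 2 * radius\<^sup>2"

definition decay :: "real \<Rightarrow> real" where
  "decay k = 2 * k - 4 * radius - 2 * \<bar>q\<bar>"

definition contraction_const :: real where
  "contraction_const = 4 * \<bar>c\<bar> * L + 8 * radius * L + 16 * L * source_bound"

definition rate :: "real \<Rightarrow> (real \<Rightarrow> real) \<Rightarrow> real \<Rightarrow> real" where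
  "rate k g s = 2 * k + 4 * g s + 2 * q"

definition forcing :: "(real \<Rightarrow> real) \<Rightarrow> real \<Rightarrow> real \<Rightarrow> real" where
  "forcing g \<tau> s = lam_ext (s - \<tau>) * riccati_source q \<eta> (g s)"

definition frozen_solution :: "real \<Rightarrow> (real \<Rightarrow> real) \<Rightarrow> real \<Rightarrow> real \<Rightarrow> real" where
  "frozen_solution k g \<tau> = terminal_solution 0 T (rate k g) (forcing g \<tau>) (c / 2 * lam_ext (T - \<tau>))"

lemma radius_ge_1: "1 \<le> radius"
  using L_nonneg by (simp add: radius_def)

lemma source_bound_nonneg: "0 \<le> source_bound"
  by (simp add: source_bound_def)

lemma contraction_const_nonneg: "0 \<le> contraction_const"
  using L_nonneg source_bound_nonneg radius_ge_1 by (simp add: contraction_const_def)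

context
  fixes g :: "real \<Rightarrow> real"
  assumes g_cont: "continuous_on {0..T} g"
begin

lemma continuous_on_rate: "continuous_on {0..T} (rate k g)"
  unfolding rate_def[abs_def] by (intro continuous_intros g_cont)

lemma continuous_on_forcing_slice: "continuous_on {0..T} (forcing g \<tau>)"
  unfolding forcing_def[abs_def] riccati_source_def
  by (intro continuous_intros g_cont continuous_on_compose2[OF continuous_on_lam_ext]) auto

lemma continuous_on_forcing: "continuous_on ({0..T} \<times> {0..T}) (\<lambda>(\<tau>, s). forcing g \<tau> s)"
proof -
  have "continuous_on ({0..T} \<times> {0..T}) (\<lambda>z. g (snd z))"
    by (rule continuous_on_compose2[OF g_cont]) (auto intro: continuous_intros)
  then show ?thesis
    unfolding forcing_def riccati_source_def split_beta
    by (intro continuous_intros continuous_on_compose2[OF continuous_on_lam_ext]) auto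
qed

lemma continuous_on_frozen_solution:
  "continuous_on ({0..T} \<times> {0..T}) (\<lambda>(\<tau>, t). frozen_solution k g \<tau> t)"
  unfolding frozen_solution_def
  by (intro continuous_on_terminal_solution continuous_on_rate continuous_on_forcing compact_Icc
      continuous_intros continuous_on_compose2[OF continuous_on_lam_ext]) auto

lemma has_real_derivative_frozen_solution:
  assumes "\<tau> \<in> {0..T}" "t \<in> {\<tau>..T}"
  shows "(frozen_solution k g \<tau> has_real_derivative
           rate k g t * frozen_solution k g \<tau> t + forcing g \<tau> t) (at t within {\<tau>..T})"
  unfolding frozen_solution_def using assms
  by (intro DERIV_subset[OF has_real_derivative_terminal_solution] continuous_on_rate
      continuous_on_forcing_slice) auto

lemma is_solution_frozen_solution:
  assumes diag: "\<And>t. t \<in> {0..T} \<Longrightarrow> g t = frozen_solution k g t t"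
  shows "is_solution T k q \<eta> c lam (frozen_solution k g)"
  unfolding is_solution_iff
proof (intro conjI ballI)
  show "continuous_on (triangle T) (\<lambda>(\<tau>, t). frozen_solution k g \<tau> t)"
    by (rule continuous_on_subset[OF continuous_on_frozen_solution]) (auto simp: triangle_def)
next
  fix p assume "p \<in> triangle T"
  then obtain \<tau> t where p: "p = (\<tau>, t)" "\<tau> \<in> {0..T}" "t \<in> {\<tau>..T}"
    by (auto simp: triangle_def)
  have "rate k g t * frozen_solution k g \<tau> t + forcing g \<tau> t
      = riccati_rhs k q \<eta> (lam (t - \<tau>)) (frozen_solution k g \<tau> t) (frozen_solution k g t t)"
    using p diag[of t] by (simp add: rate_def forcing_def riccati_rhs_eq)
  with has_real_derivative_frozen_solution[OF p(2,3)]
  show "case p of (\<tau>, t) \<Rightarrow> (frozen_solution k g \<tau> has_real_derivative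
      riccati_rhs k q \<eta> (lam (t - \<tau>)) (frozen_solution k g \<tau> t) (frozen_solution k g t t)) (at t within {\<tau>..T})"
    unfolding p(1) by (simp only: case_prod_conv) (rule DERIV_cong)
next
  fix \<tau> :: real assume "\<tau> \<in> {0..T}"
  then show "frozen_solution k g \<tau> T = c / 2 * lam (T - \<tau>)"
    by (simp add: frozen_solution_def terminal_solution_at_end)
qed

context
  assumes g_le: "\<And>s. s \<in> {0..T} \<Longrightarrow> \<bar>g s\<bar> \<le> radius"
begin

lemma decay_le_rate: "s \<in> {0..T} \<Longrightarrow> decay k \<le> rate k g s"
  using g_le[of s] by (simp add: decay_def rate_def abs_le_iff) linarith

lemma abs_forcing_le: "s \<in> {0..T} \<Longrightarrow> \<bar>forcing g \<tau> s\<bar> \<le> L * source_bound"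
  unfolding forcing_def source_bound_def abs_mult
  using abs_lam_ext_le L_nonneg abs_riccati_source_le[OF g_le] by (intro mult_mono) auto

lemma abs_frozen_solution_le:
  assumes "t \<in> {0..T}" "0 < decay k"
  shows "\<bar>frozen_solution k g \<tau> t\<bar> \<le> \<bar>c\<bar> / 2 * L + L * source_bound / decay k"
proof -
  have "\<bar>c / 2 * lam_ext (T - \<tau>)\<bar> \<le> \<bar>c\<bar> / 2 * L"
    using abs_lam_ext_le by (simp add: abs_mult mult_left_mono)
  with abs_terminal_solution_le[OF continuous_on_rate continuous_on_forcing_slice assms(1,2)
      decay_le_rate abs_forcing_le]
  show ?thesis
    unfolding frozen_solution_def by (meson add_right_mono order_trans)
qed

end

end

lemma abs_forcing_diff_le:
  assumes "\<bar>g\<^sub>1 s\<bar> \<le> radius" "\<bar>g\<^sub>2 s\<bar> \<le> radius" "\<bar>g\<^sub>1 s - g\<^sub>2 s\<bar> \<le> d"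
  shows "\<bar>forcing g\<^sub>1 \<tau> s - forcing g\<^sub>2 \<tau> s\<bar> \<le> 4 * radius * L * d"
proof -
  have "\<bar>forcing g\<^sub>1 \<tau> s - forcing g\<^sub>2 \<tau> s\<bar>
      = \<bar>lam_ext (s - \<tau>)\<bar> * \<bar>riccati_source q \<eta> (g\<^sub>1 s) - riccati_source q \<eta> (g\<^sub>2 s)\<bar>"
    by (simp add: forcing_def abs_mult right_diff_distrib[symmetric])
  also have "\<dots> \<le> L * (4 * radius * d)"
  proof (rule mult_mono)
    have "\<bar>riccati_source q \<eta> (g\<^sub>1 s) - riccati_source q \<eta> (g\<^sub>2 s)\<bar> \<le> 4 * radius * \<bar>g\<^sub>1 s - g\<^sub>2 s\<bar>"
      by (rule abs_riccati_source_diff_le[OF assms(1,2)])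
    also have "\<dots> \<le> 4 * radius * d"
      using assms(3) radius_ge_1 by (intro mult_left_mono) auto
    finally show "\<bar>riccati_source q \<eta> (g\<^sub>1 s) - riccati_source q \<eta> (g\<^sub>2 s)\<bar> \<le> 4 * radius * d" .
  qed (use abs_lam_ext_le L_nonneg in auto)
  finally show ?thesis by (simp add: algebra_simps)
qed

lemma abs_frozen_solution_diff_le:
  assumes g\<^sub>1: "continuous_on {0..T} g\<^sub>1" "\<And>s. s \<in> {0..T} \<Longrightarrow> \<bar>g\<^sub>1 s\<bar> \<le> radius"
    and g\<^sub>2: "continuous_on {0..T} g\<^sub>2" "\<And>s. s \<in> {0..T} \<Longrightarrow> \<bar>g\<^sub>2 s\<bar> \<le> radius"
    and d: "\<And>s. s \<in> {0..T} \<Longrightarrow> \<bar>g\<^sub>1 s - g\<^sub>2 s\<bar> \<le> d"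
    and "t \<in> {0..T}" "1 \<le> decay k"
  shows "\<bar>frozen_solution k g\<^sub>1 \<tau> t - frozen_solution k g\<^sub>2 \<tau> t\<bar> \<le> contraction_const / decay k * d"
proof -
  define \<beta> where "\<beta> = decay k"
  define y where "y = c / 2 * lam_ext (T - \<tau>)"
  have "0 < \<beta>" "\<beta> \<le> \<beta>\<^sup>2"
    using \<open>1 \<le> decay k\<close> by (simp_all add: \<beta>_def power2_eq_square)
  have "0 \<le> d"
    using d[OF \<open>t \<in> {0..T}\<close>] by (rule order_trans[OF abs_ge_zero])
  have "\<bar>y\<bar> \<le> \<bar>c\<bar> / 2 * L"
    using abs_lam_ext_le by (simp add: y_def abs_mult mult_left_mono)
  have "\<bar>rate k g\<^sub>1 s - rate k g\<^sub>2 s\<bar> \<le> 4 * d" if "s \<in> {0..T}" for s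
    using d[OF that] by (simp add: rate_def)
  then have "\<bar>frozen_solution k g\<^sub>1 \<tau> t - frozen_solution k g\<^sub>2 \<tau> t\<bar>
      \<le> 2 * (4 * d * \<bar>y\<bar> + 4 * radius * L * d) / \<beta> + 4 * (4 * d) * (L * source_bound) / \<beta>\<^sup>2"
    unfolding frozen_solution_def y_def[symmetric] \<beta>_def using \<open>1 \<le> decay k\<close> d
    by (intro abs_terminal_solution_diff_le continuous_on_rate continuous_on_forcing_slice
        decay_le_rate abs_forcing_le abs_forcing_diff_le g\<^sub>1 g\<^sub>2 \<open>t \<in> {0..T}\<close>) auto
  also have "\<dots> \<le> 2 * (4 * d * (\<bar>c\<bar> / 2 * L) + 4 * radius * L * d) / \<beta> + 16 * d * L * source_bound / \<beta>"
  proof (rule add_mono)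
    show "2 * (4 * d * \<bar>y\<bar> + 4 * radius * L * d) / \<beta> \<le> 2 * (4 * d * (\<bar>c\<bar> / 2 * L) + 4 * radius * L * d) / \<beta>"
      using \<open>0 < \<beta>\<close> \<open>0 \<le> d\<close> \<open>\<bar>y\<bar> \<le> \<bar>c\<bar> / 2 * L\<close>
      by (intro divide_right_mono mult_left_mono add_right_mono) auto
    have "16 * d * L * source_bound / \<beta>\<^sup>2 \<le> 16 * d * L * source_bound / \<beta>"
      using \<open>0 < \<beta>\<close> \<open>\<beta> \<le> \<beta>\<^sup>2\<close> \<open>0 \<le> d\<close> L_nonneg source_bound_nonneg by (intro divide_left_mono) auto
    then show "4 * (4 * d) * (L * source_bound) / \<beta>\<^sup>2 \<le> 16 * d * L * source_bound / \<beta>"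
      by (simp add: mult_ac)
  qed
  also have "\<dots> = contraction_const / \<beta> * d"
    using \<open>0 < \<beta>\<close> by (simp add: contraction_const_def field_simps)
  finally show ?thesis by (simp add: \<beta>_def)
qed

definition diagonal_map :: "real \<Rightarrow> (real \<Rightarrow>\<^sub>C real) \<Rightarrow> (real \<Rightarrow>\<^sub>C real)" where
  "diagonal_map k g = Bcontfun (ext_cont (\<lambda>t. frozen_solution k g t t) 0 T)"

lemma apply_diagonal_map: "diagonal_map k g x = frozen_solution k g (clamp 0 T x) (clamp 0 T x)"
proof -
  have "continuous_on {0..T} (\<lambda>t. (\<lambda>(\<tau>, t). frozen_solution k g \<tau> t) (t, t))"
    by (rule continuous_on_compose2[OF continuous_on_frozen_solution]) (auto intro: continuous_intros)
  then have "continuous_on (cbox 0 T) (\<lambda>t. frozen_solution k g t t)"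
    by simp
  from Bcontfun_inverse[OF ext_cont_in_bcontfun[OF this]] show ?thesis
    by (simp add: diagonal_map_def ext_cont_def)
qed

lemma diagonal_map_in_cball:
  assumes "g \<in> cball 0 radius" "0 < decay k" "L * source_bound \<le> decay k"
  shows "diagonal_map k g \<in> cball 0 radius"
proof -
  have "\<bar>diagonal_map k g x\<bar> \<le> \<bar>c\<bar> / 2 * L + L * source_bound / decay k" for x
    unfolding apply_diagonal_map
    by (intro abs_frozen_solution_le clamp_in_domain assms(2) abs_apply_bcontfun_le[OF assms(1)]) simp
  moreover have "L * source_bound / decay k \<le> 1"
    using assms(2,3) by simp
  ultimately have "\<bar>diagonal_map k g x\<bar> \<le> radius" for x
    unfolding radius_def by (meson add_left_mono order_trans)
  then have "norm (diagonal_map k g) \<le> radius"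
    by (intro norm_bound) simp
  then show ?thesis by simp
qed

lemma dist_diagonal_map_le:
  assumes "g\<^sub>1 \<in> cball 0 radius" "g\<^sub>2 \<in> cball 0 radius" "1 \<le> decay k"
  shows "dist (diagonal_map k g\<^sub>1) (diagonal_map k g\<^sub>2) \<le> contraction_const / decay k * dist g\<^sub>1 g\<^sub>2"
proof (rule dist_bound)
  fix x
  have "\<bar>g\<^sub>1 s - g\<^sub>2 s\<bar> \<le> dist g\<^sub>1 g\<^sub>2" for s
    using dist_bounded[of g\<^sub>1 s g\<^sub>2] by (simp add: dist_real_def)
  then show "dist (diagonal_map k g\<^sub>1 x) (diagonal_map k g\<^sub>2 x) \<le> contraction_const / decay k * dist g\<^sub>1 g\<^sub>2"
    unfolding apply_diagonal_map dist_real_def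
    by (intro abs_frozen_solution_diff_le clamp_in_domain assms(3) abs_apply_bcontfun_le assms(1,2)) simp_all
qed

lemma exists_solution:
  assumes "1 \<le> decay k" "L * source_bound \<le> decay k" "2 * contraction_const \<le> decay k"
  shows "\<exists>Lam. is_solution T k q \<eta> c lam Lam"
proof -
  have "0 < decay k" "contraction_const / decay k \<le> 1 / 2"
    using assms(1,3) by (simp_all add: divide_le_eq)
  have "complete (cball (0 :: real \<Rightarrow>\<^sub>C real) radius)" "cball (0 :: real \<Rightarrow>\<^sub>C real) radius \<noteq> {}"
    using radius_ge_1 by (auto simp: complete_eq_closed)
  then have "\<exists>!G \<in> cball 0 radius. diagonal_map k G = G"
  proof (rule Banach_fix[where c="1 / 2"])
    show "diagonal_map k ` cball 0 radius \<subseteq> cball 0 radius"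
      using diagonal_map_in_cball \<open>0 < decay k\<close> assms(2) by blast
    fix g\<^sub>1 g\<^sub>2 :: "real \<Rightarrow>\<^sub>C real" assume "g\<^sub>1 \<in> cball 0 radius" "g\<^sub>2 \<in> cball 0 radius"
    with dist_diagonal_map_le[OF this assms(1)] \<open>contraction_const / decay k \<le> 1 / 2\<close>
    show "dist (diagonal_map k g\<^sub>1) (diagonal_map k g\<^sub>2) \<le> 1 / 2 * dist g\<^sub>1 g\<^sub>2"
      by (meson order_trans mult_right_mono zero_le_dist)
  qed simp_all
  then obtain G where "diagonal_map k G = G"
    by blast
  then have "G t = frozen_solution k G t t" if "t \<in> {0..T}" for t
    using apply_diagonal_map[of k G t] that by simp
  then show ?thesis
    using is_solution_frozen_solution[OF continuous_on_apply_bcontfun] by blast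
qed

lemma exists_solution_if_large: "\<exists>K. \<forall>k > K. \<exists>Lam. is_solution T k q \<eta> c lam Lam"
proof -
  define K where "K = (4 * radius + 2 * \<bar>q\<bar> + 1 + L * source_bound + 2 * contraction_const) / 2"
  have "\<exists>Lam. is_solution T k q \<eta> c lam Lam" if "K < k" for k
  proof (rule exists_solution)
    have "1 + L * source_bound + 2 * contraction_const < decay k"
      using that by (simp add: K_def decay_def)
    then show "1 \<le> decay k" "L * source_bound \<le> decay k" "2 * contraction_const \<le> decay k"
      using mult_nonneg_nonneg[OF L_nonneg source_bound_nonneg] contraction_const_nonneg by linarith+
  qed
  then show ?thesis by blast
qed

end

theorem lemma4p1:
  fixes T q \<eta> c :: real and lam :: "real \<Rightarrow> real"
  assumes "T > 0" and "q > 0" and "\<eta> > 0" and "c > 0"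
    and "\<forall>x\<in>{0..T}. lam x > 0"
    and "mono_on {0..T} lam"
    and "\<exists>lam'. (\<forall>x\<in>{0..T}. (lam has_real_derivative lam' x) (at x within {0..T}))
                 \<and> continuous_on {0..T} lam'"
    and "lam 0 = 1"
  shows "\<exists>C>0. \<forall>k::real. k \<ge> 0 \<and> k > max (4 * C^2) 1 \<longrightarrow>
           (\<exists>Lam. is_solution T k q \<eta> c lam Lam) \<and>
           (\<forall>Lam1 Lam2. is_solution T k q \<eta> c lam Lam1 \<and> is_solution T k q \<eta> c lam Lam2
              \<longrightarrow> (\<forall>(\<tau>, t) \<in> triangle T. Lam1 \<tau> t = Lam2 \<tau> t))"
proof -
  obtain lam' where "\<forall>x\<in>{0..T}. (lam has_real_derivative lam' x) (at x within {0..T})"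
    using assms(7) by blast
  then have lam_cont: "continuous_on {0..T} lam"
    unfolding continuous_on_eq_continuous_within using DERIV_continuous by blast
  have "\<bar>lam x\<bar> \<le> lam T" if "x \<in> {0..T}" for x
    using assms(5) mono_onD[OF assms(6) that, of T] assms(1) that by fastforce
  then interpret riccati_data T q \<eta> c lam "lam T"
    using assms(1) lam_cont by unfold_locales auto
  obtain K where K: "\<And>k. K < k \<Longrightarrow> \<exists>Lam. is_solution T k q \<eta> c lam Lam"
    using exists_solution_if_large by blast
  define C where "C = sqrt (\<bar>K\<bar> + 1) / 2"
  have "0 < C" "K < 4 * C\<^sup>2"
    by (auto simp: C_def power_divide)
  then show ?thesis
    using K is_solution_unique[OF lam_cont] by (intro exI[of _ C]) auto
qed

end
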